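(* Let $(A_k,b_k,c_k)_{k\in\mathbb{Z}}$ and $(\tilde A_k,\tilde b_k,\tilde c_k)_{k\in\mathbb{Z}}$ be algebraically equivalent discrete-time systems, with $(\tilde A_k,\tilde b_k,\tilde c_k)$ in controller canonical form. Then for every $k\in\mathbb{Z}$, the first coordinate of $\tilde c_k$ is zero if and only if $c_k\operatorname{adj}(A_k)b_k=0$.
   Context: A system $(A_k,b_k,c_k)$ means $x_{k+1}=A_kx_k+b_ku_k$, $y_k=c_kx_k$ with $A_k\in\mathbb{R}^{n\times n}$, $b_k\in\mathbb{R}^{n\times1}$, $c_k\in\mathbb{R}^{1\times n}$. Algebraic equivalence: there are invertible $T_k$ with $\tilde A_k=T_{k+1}A_kT_k^{-1}$, $\tilde b_k=T_{k+1}b_k$, $\tilde c_k=c_kT_k^{-1}$ for all $k$. Controller canonical form: $\tilde b_k=(0,\dots,0,1)^T$ and $\tilde A_k$ has ones on the superdiagonal, zeros elsewhere in the first $n-1$ rows, and an arbitrary last row. $\operatorname{adj}$ denotes the adjugate matrix. *)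

theory Defs
  imports "Jordan_Normal_Form.Determinant"
begin

definition is_system :: "nat \<Rightarrow> (int \<Rightarrow> real mat) \<Rightarrow> (int \<Rightarrow> real mat) \<Rightarrow> (int \<Rightarrow> real mat) \<Rightarrow> bool" where
  "is_system n A b c \<longleftrightarrow>
     (\<forall>k. A k \<in> carrier_mat n n \<and> b k \<in> carrier_mat n 1 \<and> c k \<in> carrier_mat 1 n)"

definition alg_equiv :: "nat \<Rightarrow> (int \<Rightarrow> real mat) \<Rightarrow> (int \<Rightarrow> real mat) \<Rightarrow> (int \<Rightarrow> real mat)
    \<Rightarrow> (int \<Rightarrow> real mat) \<Rightarrow> (int \<Rightarrow> real mat) \<Rightarrow> (int \<Rightarrow> real mat) \<Rightarrow> bool" where
  "alg_equiv n A b c At bt ct \<longleftrightarrow>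
     (\<exists>T Ti :: int \<Rightarrow> real mat. \<forall>k.
        T k \<in> carrier_mat n n \<and> Ti k \<in> carrier_mat n n \<and>
        T k * Ti k = 1\<^sub>m n \<and> Ti k * T k = 1\<^sub>m n \<and>
        At k = T (k + 1) * A k * Ti k \<and>
        bt k = T (k + 1) * b k \<and>
        ct k = c k * Ti k)"

text \<open>Controller canonical form (indices 0-based): bt k = (0,...,0,1)^T and
At k has ones on the superdiagonal and zeros elsewhere in its first n-1 rows;
the last row is arbitrary.\<close>

definition controller_canonical :: "nat \<Rightarrow> (int \<Rightarrow> real mat) \<Rightarrow> (int \<Rightarrow> real mat) \<Rightarrow> bool" where
  "controller_canonical n At bt \<longleftrightarrow>
     (\<forall>k. (\<forall>i<n. bt k $$ (i, 0) = (if i = n - 1 then 1 else 0)) \<and>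
          (\<forall>i<n - 1. \<forall>j<n. At k $$ (i, j) = (if j = i + 1 then 1 else 0)))"

end

theory Submission
  imports Defs
begin

text \<open>Border A by b and c into M = [[A, b], [c, 0]]. Expanding det M along its last row and
then each minor along its last column gives det M = - c adj(A) b. An algebraic equivalence
multiplies M on the left by diag(P, 1) and on the right by diag(Q, 1) with P, Q invertible, so
the vanishing of c adj(A) b is invariant. For a matrix in controller canonical form only the
cofactor at the first entry of the last row survives, whence c adj(A) b = (-1)^(n-1) c_1.\<close>

definition bordered_mat :: "'a :: zero mat \<Rightarrow> 'a mat \<Rightarrow> 'a mat \<Rightarrow> 'a mat" where
  "bordered_mat A b c = four_block_mat A b c (0\<^sub>m 1 1)"

definition pad_one_mat :: "'a :: {zero, one} mat \<Rightarrow> 'a mat" where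
  "pad_one_mat P = four_block_mat P (0\<^sub>m (dim_row P) 1) (0\<^sub>m 1 (dim_col P)) (1\<^sub>m 1)"

lemma bordered_mat_carrier:
  assumes "A \<in> carrier_mat n n" "b \<in> carrier_mat n 1" "c \<in> carrier_mat 1 n"
  shows "bordered_mat A b c \<in> carrier_mat (Suc n) (Suc n)"
  using assms unfolding bordered_mat_def by auto

lemma pad_one_mat_carrier:
  assumes "P \<in> carrier_mat n n"
  shows "pad_one_mat P \<in> carrier_mat (Suc n) (Suc n)"
  using assms unfolding pad_one_mat_def by auto

lemma adj_mat_bilinear_form:
  fixes A b c :: "'a :: comm_ring_1 mat"
  assumes A: "A \<in> carrier_mat n n" and b: "b \<in> carrier_mat n 1" and c: "c \<in> carrier_mat 1 n"
  shows "(c * adj_mat A * b) $$ (0, 0) = (\<Sum>j<n. \<Sum>i<n. c $$ (0, j) * b $$ (i, 0) * cofactor A i j)"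
proof -
  have cA: "c * adj_mat A \<in> carrier_mat 1 n"
    using c adj_mat(1)[OF A] by auto
  have "(c * adj_mat A * b) $$ (0, 0) = (\<Sum>i<n. (c * adj_mat A) $$ (0, i) * b $$ (i, 0))"
    using carrier_matD[OF cA] carrier_matD[OF b]
    by (subst index_mult_mat(1)) (auto simp: scalar_prod_def atLeast0LessThan intro!: sum.cong)
  also have "\<dots> = (\<Sum>i<n. (\<Sum>j<n. c $$ (0, j) * cofactor A i j) * b $$ (i, 0))"
    using A c by (auto simp: scalar_prod_def adj_mat_def atLeast0LessThan intro!: sum.cong)
  also have "\<dots> = (\<Sum>j<n. \<Sum>i<n. c $$ (0, j) * b $$ (i, 0) * cofactor A i j)"
    by (subst sum.swap) (simp add: sum_distrib_left sum_distrib_right mult_ac)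
  finally show ?thesis .
qed

lemma cofactor_bordered_mat_last_row:
  fixes A b c :: "'a :: comm_ring_1 mat"
  assumes A: "A \<in> carrier_mat n n" and b: "b \<in> carrier_mat n 1" and c: "c \<in> carrier_mat 1 n"
    and j: "j < n"
  shows "cofactor (bordered_mat A b c) n j = - (\<Sum>i<n. b $$ (i, 0) * cofactor A i j)"
proof -
  let ?M = "bordered_mat A b c"
  define D where "D = mat_delete ?M n j"
  obtain m where m: "n = Suc m" using j by (cases n) auto
  have D: "D \<in> carrier_mat n n"
    unfolding D_def using bordered_mat_carrier[OF A b c] by auto
  have D_last_col: "D $$ (i, m) = b $$ (i, 0)" if "i < n" for i
    using that j A b c m unfolding D_def bordered_mat_def mat_delete_def by auto
  have D_minor: "mat_delete D i m = mat_delete A i j" if "i < n" for i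
    by (rule eq_matI) (use that j A b c m in \<open>auto simp: D_def bordered_mat_def mat_delete_def\<close>)
  have "det D = (\<Sum>i<n. D $$ (i, m) * cofactor D i m)"
    by (rule laplace_expansion_column[OF D]) (simp add: m)
  also have "\<dots> = (\<Sum>i<n. b $$ (i, 0) * ((-1) ^ (i + m) * det (mat_delete A i j)))"
    unfolding cofactor_def by (intro sum.cong) (auto simp: D_last_col D_minor)
  finally have det_D: "det D = \<dots>" .
  have sign: "(-1 :: 'a) ^ (n + j) * (-1) ^ (i + m) = - ((-1) ^ (i + j))" for i
  proof -
    have "n + j + (i + m) = 2 * m + Suc (i + j)" using m by simp
    then show ?thesis by (simp only: power_add[symmetric]) (simp add: power_add power_mult)
  qed
  show ?thesis
    unfolding cofactor_def D_def[symmetric] det_D sum_distrib_left sum_negf[symmetric]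
  proof (intro sum.cong refl)
    fix i
    have "(-1) ^ (n + j) * (b $$ (i, 0) * ((-1) ^ (i + m) * det (mat_delete A i j)))
        = b $$ (i, 0) * (((-1) ^ (n + j) * (-1) ^ (i + m)) * det (mat_delete A i j))"
      by (simp only: mult_ac)
    then show "(-1) ^ (n + j) * (b $$ (i, 0) * ((-1) ^ (i + m) * det (mat_delete A i j)))
        = - (b $$ (i, 0) * ((-1) ^ (i + j) * det (mat_delete A i j)))"
      by (simp add: sign)
  qed
qed

lemma det_bordered_mat:
  fixes A b c :: "'a :: comm_ring_1 mat"
  assumes A: "A \<in> carrier_mat n n" and b: "b \<in> carrier_mat n 1" and c: "c \<in> carrier_mat 1 n"
  shows "det (bordered_mat A b c) = - (c * adj_mat A * b) $$ (0, 0)"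
proof -
  let ?M = "bordered_mat A b c"
  have "det ?M = (\<Sum>j<Suc n. ?M $$ (n, j) * cofactor ?M n j)"
    by (rule laplace_expansion_row[OF bordered_mat_carrier[OF A b c]]) simp
  also have "\<dots> = (\<Sum>j<n. c $$ (0, j) * cofactor ?M n j)"
    using A b c by (simp add: bordered_mat_def)
  also have "\<dots> = - (\<Sum>j<n. \<Sum>i<n. c $$ (0, j) * b $$ (i, 0) * cofactor A i j)"
    by (simp add: cofactor_bordered_mat_last_row[OF A b c] sum_distrib_left sum_negf mult_ac)
  finally show ?thesis
    by (simp add: adj_mat_bilinear_form[OF A b c])
qed

lemma det_pad_one_mat:
  fixes P :: "'a :: idom mat"
  assumes "P \<in> carrier_mat n n"
  shows "det (pad_one_mat P) = det P"
  using assms unfolding pad_one_mat_def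
  by (subst det_four_block_mat_upper_right_zero) auto

lemma bordered_mat_mult:
  fixes A b c P Q :: "'a :: comm_ring_1 mat"
  assumes P: "P \<in> carrier_mat n n" and Q: "Q \<in> carrier_mat n n"
    and A: "A \<in> carrier_mat n n" and b: "b \<in> carrier_mat n 1" and c: "c \<in> carrier_mat 1 n"
  shows "bordered_mat (P * A * Q) (P * b) (c * Q) = pad_one_mat P * bordered_mat A b c * pad_one_mat Q"
proof -
  have "pad_one_mat P * bordered_mat A b c = four_block_mat (P * A) (P * b) c (0\<^sub>m 1 1)"
    unfolding pad_one_mat_def bordered_mat_def
    using P A b c by (subst mult_four_block_mat) auto
  also have "\<dots> * pad_one_mat Q = bordered_mat (P * A * Q) (P * b) (c * Q)"
    unfolding pad_one_mat_def bordered_mat_def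
    using P Q A b c by (subst mult_four_block_mat) auto
  finally show ?thesis by simp
qed

lemma adj_mat_bilinear_form_mult:
  fixes A b c P Q :: "'a :: idom mat"
  assumes P: "P \<in> carrier_mat n n" and Q: "Q \<in> carrier_mat n n"
    and A: "A \<in> carrier_mat n n" and b: "b \<in> carrier_mat n 1" and c: "c \<in> carrier_mat 1 n"
  shows "(c * Q * adj_mat (P * A * Q) * (P * b)) $$ (0, 0) = det P * det Q * (c * adj_mat A * b) $$ (0, 0)"
proof -
  have PAQ: "P * A * Q \<in> carrier_mat n n" and Pb: "P * b \<in> carrier_mat n 1" and cQ: "c * Q \<in> carrier_mat 1 n"
    using P Q A b c by auto
  note M = bordered_mat_carrier[OF A b c] and pad = pad_one_mat_carrier[OF P] pad_one_mat_carrier[OF Q]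
  have "- (c * Q * adj_mat (P * A * Q) * (P * b)) $$ (0, 0) = det (bordered_mat (P * A * Q) (P * b) (c * Q))"
    by (rule det_bordered_mat[OF PAQ Pb cQ, symmetric])
  also have "\<dots> = det P * det (bordered_mat A b c) * det Q"
    unfolding bordered_mat_mult[OF P Q A b c]
    by (simp add: det_mult[OF mult_carrier_mat[OF pad(1) M] pad(2)] det_mult[OF pad(1) M]
        det_pad_one_mat[OF P] det_pad_one_mat[OF Q])
  finally show ?thesis
    by (simp add: det_bordered_mat[OF A b c])
qed

lemma cofactor_controller_last_row:
  fixes At :: "'a :: comm_ring_1 mat"
  assumes At: "At \<in> carrier_mat n n" and j: "j < n"
    and shift: "\<forall>i<n - 1. \<forall>j<n. At $$ (i, j) = (if j = i + 1 then 1 else 0)"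
  shows "cofactor At (n - 1) j = (if j = 0 then (-1) ^ (n - 1) else 0)"
proof (cases "j = 0")
  case True
  have "mat_delete At (n - 1) 0 = 1\<^sub>m (n - 1)"
    by (rule eq_matI) (use At shift in \<open>auto simp: mat_delete_def\<close>)
  then show ?thesis
    using True by (simp add: cofactor_def)
next
  case False
  let ?D = "mat_delete At (n - 1) j"
  have D: "?D \<in> carrier_mat (n - 1) (n - 1)"
    using At by auto
  \<comment> \<open>column 0 of At vanishes above the last row and survives in the minor since j > 0\<close>
  have "det ?D = (\<Sum>i<n - 1. ?D $$ (i, 0) * cofactor ?D i 0)"
    by (rule laplace_expansion_column[OF D]) (use False j in auto)
  also have "\<dots> = 0"
    by (rule sum.neutral) (use At shift False j in \<open>auto simp: mat_delete_def\<close>)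
  finally show ?thesis
    using False by (simp add: cofactor_def)
qed

lemma adj_mat_bilinear_form_controller:
  fixes At bt ct :: "'a :: comm_ring_1 mat"
  assumes At: "At \<in> carrier_mat n n" and bt: "bt \<in> carrier_mat n 1" and ct: "ct \<in> carrier_mat 1 n"
    and n: "n \<ge> 1"
    and bt_last: "\<forall>i<n. bt $$ (i, 0) = (if i = n - 1 then 1 else 0)"
    and shift: "\<forall>i<n - 1. \<forall>j<n. At $$ (i, j) = (if j = i + 1 then 1 else 0)"
  shows "(ct * adj_mat At * bt) $$ (0, 0) = (-1) ^ (n - 1) * ct $$ (0, 0)"
proof -
  have inner: "(\<Sum>i<n. ct $$ (0, j) * bt $$ (i, 0) * cofactor At i j) = ct $$ (0, j) * cofactor At (n - 1) j"
    for j
  proof -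
    have "(\<Sum>i<n. ct $$ (0, j) * bt $$ (i, 0) * cofactor At i j)
        = (\<Sum>i<n. if i = n - 1 then ct $$ (0, j) * cofactor At i j else 0)"
      by (rule sum.cong) (use bt_last in auto)
    then show ?thesis
      using n by (simp add: sum.delta)
  qed
  have "(ct * adj_mat At * bt) $$ (0, 0) = (\<Sum>j<n. ct $$ (0, j) * cofactor At (n - 1) j)"
    unfolding adj_mat_bilinear_form[OF At bt ct] inner ..
  also have "\<dots> = (\<Sum>j<n. if j = 0 then ct $$ (0, j) * (-1) ^ (n - 1) else 0)"
    by (rule sum.cong) (use cofactor_controller_last_row[OF At _ shift] in auto)
  also have "\<dots> = (-1) ^ (n - 1) * ct $$ (0, 0)"
    using n by (simp add: sum.delta)
  finally show ?thesis .
qed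

lemma det_nonzero_of_mult_eq_one:
  fixes P Q :: "'a :: comm_ring_1 mat"
  assumes "P \<in> carrier_mat n n" "Q \<in> carrier_mat n n" "P * Q = 1\<^sub>m n"
  shows "det P \<noteq> 0" "det Q \<noteq> 0"
  using det_mult[OF assms(1,2)] assms(3) by auto

theorem proposition7:
  fixes n :: nat and A b c At bt ct :: "int \<Rightarrow> real mat"
  assumes "n \<ge> 1"
    and "is_system n A b c" and "is_system n At bt ct"
    and "alg_equiv n A b c At bt ct"
    and "controller_canonical n At bt"
  shows "\<forall>k. ct k $$ (0, 0) = 0 \<longleftrightarrow> (c k * adj_mat (A k) * b k) $$ (0, 0) = 0"
proof
  fix k
  obtain T Ti where T: "\<And>k. T k \<in> carrier_mat n n \<and> Ti k \<in> carrier_mat n n \<and>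
        T k * Ti k = 1\<^sub>m n \<and> Ti k * T k = 1\<^sub>m n \<and>
        At k = T (k + 1) * A k * Ti k \<and> bt k = T (k + 1) * b k \<and> ct k = c k * Ti k"
    using assms(4) unfolding alg_equiv_def by blast
  have sys: "A k \<in> carrier_mat n n" "b k \<in> carrier_mat n 1" "c k \<in> carrier_mat 1 n"
    and sys_canonical: "At k \<in> carrier_mat n n" "bt k \<in> carrier_mat n 1" "ct k \<in> carrier_mat 1 n"
    using assms(2,3) unfolding is_system_def by auto
  have "(-1) ^ (n - 1) * ct k $$ (0, 0) = (ct k * adj_mat (At k) * bt k) $$ (0, 0)"
    using assms(5) unfolding controller_canonical_def
    by (intro adj_mat_bilinear_form_controller[OF sys_canonical assms(1), symmetric]) auto
  also have "\<dots> = det (T (k + 1)) * det (Ti k) * (c k * adj_mat (A k) * b k) $$ (0, 0)"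
    using T[of k] T[of "k + 1"] adj_mat_bilinear_form_mult[OF _ _ sys] by auto
  finally have forms_related: "(-1) ^ (n - 1) * ct k $$ (0, 0) = \<dots>" .
  have "det (T (k + 1)) \<noteq> 0" "det (Ti k) \<noteq> 0"
    using T[of k] T[of "k + 1"] det_nonzero_of_mult_eq_one by metis+
  with forms_related show "ct k $$ (0, 0) = 0 \<longleftrightarrow> (c k * adj_mat (A k) * b k) $$ (0, 0) = 0"
    by auto
qed

end
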